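(* If $s_1,s_2\in\mathcal F(M,g^M,E,h^E)$ and $t_1,t_2>0$ are real numbers, then $t_1s_1+t_2s_2\in\mathcal F(M,g^M,E,h^E)$. In particular $\mathcal F(M,g^M,E,h^E)$ is a convex cone.
   Context: $G$ is a compact Lie group with Lie algebra $\mathfrak g$; a $G$-invariant inner product on $\mathfrak g^*$ is fixed, inducing an isomorphism $\psi:\mathfrak g^*\to\mathfrak g$ and norms $|\cdot|$. For $u\in\mathfrak g$ let $u_M(x)=\frac{d}{dt}|_{t=0}\exp(tu)\cdot x$. $(M,g^M)$ is a complete complex manifold without boundary of complex dimension $n$, with complex structure $J$ orthogonal for $g^M$, on which $G$ acts holomorphically and isometrically. It is a tamed asymptotically Kähler $G$-manifold: there is a $G$-invariant compact $K\subset M$ such that $g^M$ is Kähler on $M\setminus K$ with Kähler form $\omega$, the action on $M\setminus K$ is Hamiltonian with moment map $\mu:M\setminus K\to\mathfrak g^*$ (i.e. $d\langle\mu,u\rangle=\iota_{u_M}\omega$), $\mu$ is proper, and the vector field $-J\nabla(|\mu|^2/2)$ vanishes nowhere outside some compact set. Fix a smooth $G$-equivariant extension $\tilde\mu:M\to\mathfrak g^*$ of $\mu$ and set $\mathbf v(x)=\psi(\tilde\mu(x))$, $v=-J\nabla(|\tilde\mu|^2/2)$. $E$ is a $G$-equivariant holomorphic vector bundle over $M$ with a $G$-invariant Hermitian metric $h^E$ and $G$-invariant holomorphic Hermitian connection $\nabla^E$. Let $\mathcal E=E\otimes\Lambda^\bullet(T^{0,1}M)^*$ with connection $\nabla^{\mathcal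 E}=\nabla^E\otimes1+1\otimes\nabla^{LC}$. For $u\in\mathfrak g$ let $\mu^{\mathcal E}(u)=\nabla^{\mathcal E}_{u_M}-\mathcal L^{\mathcal E}_u\in\mathrm{End}(\mathcal E)$, $\mathcal L^{\mathcal E}_u$ the infinitesimal action. Set $\nu=|\mathbf v|+\|\nabla^{LC}v\|+\|\mu^{\mathcal E}(\mathbf v)\|+|v|+1$. A smooth $s:[0,\infty)\to[0,\infty)$ is admissible for $(M,g^M,E,h^E)$ if $s'>0$ and $f(x):=s'(|\tilde\mu(x)|^2/2)$ satisfies $\lim_{x\to\infty}\frac{f^2|v|^2}{|df|\,|v|+f\nu+1}=\infty$ ($x$ leaving every compact set). $\mathcal F(M,g^M,E,h^E)$ is the set of admissible functions. *)

theory Defs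
  imports "HOL-Analysis.Analysis"
begin

definition cocompact :: "'a::topological_space filter" where
  "cocompact = (INF K\<in>{K. compact K}. principal (- K))"

fun hderiv :: "nat \<Rightarrow> (real \<Rightarrow> real) \<Rightarrow> real \<Rightarrow> real" where
  "hderiv 0 s = s"
| "hderiv (Suc k) s = (\<lambda>x. vector_derivative (hderiv k s) (at x within {0..}))"

definition smooth_halfline :: "(real \<Rightarrow> real) \<Rightarrow> bool" where
  "smooth_halfline s \<longleftrightarrow> (\<forall>x\<ge>0. s x \<ge> 0) \<and>
     (\<forall>k. \<forall>x\<ge>0. (hderiv k s has_vector_derivative hderiv (Suc k) s x) (at x within {0..}))"

text \<open>The geometric data enter only through:
  mu :: M \<Rightarrow> 'g  (the extension \<mu>~ of the moment map, valued in \<gg>^* with the invariant inner product),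
  dphi x = |d(|\<mu>~|^2/2)|(x),  vnorm x = |v(x)|,  nu x = \<nu>(x).
  With \<phi> = |\<mu>~|^2/2 and f = s' \<circ> \<phi>, the chain rule gives |df| = |s''(\<phi>)| |d\<phi>|.\<close>
definition admissible ::
  "('m::topological_space \<Rightarrow> 'g::real_normed_vector) \<Rightarrow> ('m \<Rightarrow> real) \<Rightarrow> ('m \<Rightarrow> real)
     \<Rightarrow> ('m \<Rightarrow> real) \<Rightarrow> (real \<Rightarrow> real) \<Rightarrow> bool" where
  "admissible mu dphi vnorm nu s \<longleftrightarrow>
     smooth_halfline s \<and> (\<forall>x\<ge>0. hderiv 1 s x > 0) \<and>
     (let f = (\<lambda>x. hderiv 1 s (norm (mu x) ^ 2 / 2));
          df = (\<lambda>x. \<bar>hderiv 2 s (norm (mu x) ^ 2 / 2)\<bar> * dphi x)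
      in filterlim (\<lambda>x. (f x)^2 * (vnorm x)^2 / (df x * vnorm x + f x * nu x + 1))
           at_top cocompact)"

end

theory Submission
  imports Defs
begin

(* Write R(f, f'') = f^2 |v|^2 / (|f''| |d phi| |v| + f nu + 1) for the quantity whose
   divergence along the cocompact filter defines admissibility, evaluated at
   f = s'(phi), f'' = s''(phi).  For s = t1 s1 + t2 s2 the derivatives combine linearly,
   so the proof has three independent parts:
   (1) smoothness on the half line and the identity s^(k) = t1 s1^(k) + t2 s2^(k) are
       preserved by positive linear combinations (induction on k);
   (2) a pointwise estimate: the numerator of R for the combination dominates
       t1^2 N1 + t2^2 N2 and its denominator is at most (t1+t2+1)(D1+D2), whence
       R(comb) >= min(t1^2, t2^2)/(t1+t2+1) * min(R1, R2);
   (3) a filter lemma: whatever is bounded below by a positive multiple of the minimum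
       of two functions tending to infinity tends to infinity as well. *)

definition adm_ratio :: "real \<Rightarrow> real \<Rightarrow> real \<Rightarrow> real \<Rightarrow> real \<Rightarrow> real" where
  "adm_ratio f f2 dphi V nu = f^2 * V^2 / (\<bar>f2\<bar> * dphi * V + f * nu + 1)"

lemma admissible_iff_ratio:
  "admissible mu dphi vnorm nu s \<longleftrightarrow>
     smooth_halfline s \<and> (\<forall>x\<ge>0. hderiv 1 s x > 0) \<and>
     filterlim (\<lambda>x. adm_ratio (hderiv 1 s (norm (mu x) ^ 2 / 2)) (hderiv 2 s (norm (mu x) ^ 2 / 2))
                     (dphi x) (vnorm x) (nu x)) at_top cocompact"
  unfolding admissible_def adm_ratio_def Let_def by (simp add: mult.assoc)

text \<open>Every point of \<open>[0,\<infinity>)\<close> is a limit point of \<open>[0,\<infinity>)\<close>, so one-sided derivatives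
  there are unique.\<close>
lemma at_within_halfline_nontrivial:
  assumes "x \<ge> (0::real)"
  shows "at x within {0..} \<noteq> bot"
proof -
  have "x islimpt {x..x+1}" by simp
  hence "x islimpt {0..}" by (rule islimpt_subset) (use assms in auto)
  thus ?thesis using trivial_limit_within by blast
qed

lemma hderiv_combination_has_derivative:
  assumes s1: "smooth_halfline s1" and s2: "smooth_halfline s2" and x: "x \<ge> 0"
    and lin: "\<And>y. y \<ge> 0 \<Longrightarrow> hderiv k (\<lambda>r. t1 * s1 r + t2 * s2 r) y
                                  = t1 * hderiv k s1 y + t2 * hderiv k s2 y"
  shows "(hderiv k (\<lambda>r. t1 * s1 r + t2 * s2 r) has_vector_derivative
            t1 * hderiv (Suc k) s1 x + t2 * hderiv (Suc k) s2 x) (at x within {0..})"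
proof -
  have d1: "(hderiv k s1 has_vector_derivative hderiv (Suc k) s1 x) (at x within {0..})"
    using s1 x unfolding smooth_halfline_def by blast
  have d2: "(hderiv k s2 has_vector_derivative hderiv (Suc k) s2 x) (at x within {0..})"
    using s2 x unfolding smooth_halfline_def by blast
  have "((\<lambda>y. t1 * hderiv k s1 y + t2 * hderiv k s2 y) has_vector_derivative
          t1 * hderiv (Suc k) s1 x + t2 * hderiv (Suc k) s2 x) (at x within {0..})"
    using has_vector_derivative_add[OF has_vector_derivative_mult_right[OF d1, of t1]
        has_vector_derivative_mult_right[OF d2, of t2]] by simp
  thus ?thesis
    by (rule has_vector_derivative_transform[rotated 2]) (use x lin in auto)
qed

lemma hderiv_combination:
  assumes s1: "smooth_halfline s1" and s2: "smooth_halfline s2" and x: "x \<ge> 0"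
  shows "hderiv k (\<lambda>r. t1 * s1 r + t2 * s2 r) x = t1 * hderiv k s1 x + t2 * hderiv k s2 x"
  using x
proof (induction k arbitrary: x)
  case 0
  show ?case by simp
next
  case (Suc k)
  have "(hderiv k (\<lambda>r. t1 * s1 r + t2 * s2 r) has_vector_derivative
          t1 * hderiv (Suc k) s1 x + t2 * hderiv (Suc k) s2 x) (at x within {0..})"
    using hderiv_combination_has_derivative[OF s1 s2 Suc.prems] Suc.IH by blast
  thus ?case
    using vector_derivative_within[OF at_within_halfline_nontrivial[OF Suc.prems]] by simp
qed

lemma smooth_halfline_combination:
  assumes s1: "smooth_halfline s1" and s2: "smooth_halfline s2" and t: "t1 \<ge> 0" "t2 \<ge> 0"
  shows "smooth_halfline (\<lambda>r. t1 * s1 r + t2 * s2 r)"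
  unfolding smooth_halfline_def
proof (intro conjI allI impI)
  fix x :: real assume "x \<ge> 0"
  thus "0 \<le> t1 * s1 x + t2 * s2 x"
    using s1 s2 t unfolding smooth_halfline_def by (simp add: add_nonneg_nonneg)
next
  fix k and x :: real assume x: "x \<ge> 0"
  show "(hderiv k (\<lambda>r. t1 * s1 r + t2 * s2 r) has_vector_derivative
          hderiv (Suc k) (\<lambda>r. t1 * s1 r + t2 * s2 r) x) (at x within {0..})"
  proof -
    have "(hderiv k (\<lambda>r. t1 * s1 r + t2 * s2 r) has_vector_derivative
            t1 * hderiv (Suc k) s1 x + t2 * hderiv (Suc k) s2 x) (at x within {0..})"
      using hderiv_combination_has_derivative[OF s1 s2 x] hderiv_combination[OF s1 s2] by blast
    thus ?thesis using hderiv_combination[OF s1 s2 x, of "Suc k"] by simp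
  qed
qed

text \<open>Cross terms are nonnegative: the squared combination dominates the combination of squares.\<close>
lemma numerator_combination_bound:
  fixes t1 t2 f1 f2 V :: real
  assumes "t1 \<ge> 0" "t2 \<ge> 0" "f1 \<ge> 0" "f2 \<ge> 0"
  shows "t1^2 * (f1^2 * V^2) + t2^2 * (f2^2 * V^2) \<le> (t1*f1 + t2*f2)^2 * V^2"
proof -
  have "(t1*f1 + t2*f2)^2 * V^2 = t1^2 * (f1^2 * V^2) + t2^2 * (f2^2 * V^2) + 2*t1*t2*f1*f2 * V^2"
    by (simp add: power2_eq_square algebra_simps)
  moreover have "2*t1*t2*f1*f2 * V^2 \<ge> 0" using assms by simp
  ultimately show ?thesis by linarith
qed

lemma denominator_combination_bound:
  fixes t1 t2 f1 f2 a1 a2 g V nu :: real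
  assumes t: "t1 > 0" "t2 > 0" and f: "f1 > 0" "f2 > 0" and gV: "g * V \<ge> 0" and nu: "nu \<ge> 0"
  defines "D1 \<equiv> \<bar>a1\<bar> * g * V + f1 * nu + 1" and "D2 \<equiv> \<bar>a2\<bar> * g * V + f2 * nu + 1"
  shows "\<bar>t1*a1 + t2*a2\<bar> * g * V + (t1*f1 + t2*f2) * nu + 1 \<le> (t1 + t2 + 1) * (D1 + D2)"
    and "D1 \<ge> 1" and "D2 \<ge> 1"
proof -
  have a: "\<bar>a1\<bar> * g * V \<ge> 0" "\<bar>a2\<bar> * g * V \<ge> 0" using gV by (simp_all add: mult.assoc)
  have b: "f1 * nu \<ge> 0" "f2 * nu \<ge> 0" using f nu by simp_all
  show D1: "D1 \<ge> 1" and D2: "D2 \<ge> 1" unfolding D1_def D2_def using a b by linarith+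
  have "\<bar>t1*a1 + t2*a2\<bar> \<le> t1 * \<bar>a1\<bar> + t2 * \<bar>a2\<bar>"
    using abs_triangle_ineq[of "t1*a1" "t2*a2"] t by (simp add: abs_mult)
  hence "\<bar>t1*a1 + t2*a2\<bar> * (g * V) \<le> (t1 * \<bar>a1\<bar> + t2 * \<bar>a2\<bar>) * (g * V)"
    using gV by (rule mult_right_mono)
  hence "\<bar>t1*a1 + t2*a2\<bar> * g * V + (t1*f1 + t2*f2) * nu + 1 \<le> t1 * D1 + t2 * D2 + 1"
    unfolding D1_def D2_def using t by (simp add: algebra_simps)
  also have "\<dots> \<le> (t1 + t2 + 1) * (D1 + D2)"
  proof -
    have "D1 * t2 \<ge> 0" "D2 * t1 \<ge> 0" using t D1 D2 by simp_all
    thus ?thesis using D1 D2 by (simp add: algebra_simps)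
  qed
  finally show "\<bar>t1*a1 + t2*a2\<bar> * g * V + (t1*f1 + t2*f2) * nu + 1 \<le> (t1 + t2 + 1) * (D1 + D2)" .
qed

lemma adm_ratio_combination:
  fixes t1 t2 f1 f2 a1 a2 g V nu :: real
  assumes t: "t1 > 0" "t2 > 0" and f: "f1 > 0" "f2 > 0" and g: "g \<ge> 0" and V: "V \<ge> 0"
    and nu: "nu \<ge> 0"
  shows "min (t1^2) (t2^2) / (t1 + t2 + 1) * min (adm_ratio f1 a1 g V nu) (adm_ratio f2 a2 g V nu)
           \<le> adm_ratio (t1*f1 + t2*f2) (t1*a1 + t2*a2) g V nu"
proof -
  define D1 where "D1 = \<bar>a1\<bar> * g * V + f1 * nu + 1"
  define D2 where "D2 = \<bar>a2\<bar> * g * V + f2 * nu + 1"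
  define D where "D = \<bar>t1*a1 + t2*a2\<bar> * g * V + (t1*f1 + t2*f2) * nu + 1"
  define K where "K = min (adm_ratio f1 a1 g V nu) (adm_ratio f2 a2 g V nu)"
  define m where "m = min (t1^2) (t2^2)"
  define c where "c = t1 + t2 + 1"
  have gV: "g * V \<ge> 0" using g V by simp
  note bounds = denominator_combination_bound[OF t f gV nu]
  have D1: "D1 \<ge> 1" and D2: "D2 \<ge> 1" and Dle: "D \<le> c * (D1 + D2)"
    using bounds unfolding D1_def D2_def D_def c_def by auto
  have D: "D \<ge> 1"
    using gV f t nu unfolding D_def by (simp add: mult.assoc add_nonneg_nonneg)
  have K0: "K \<ge> 0" using D1 D2 unfolding K_def adm_ratio_def D1_def D2_def by simp
  have "K \<le> f1^2 * V^2 / D1" "K \<le> f2^2 * V^2 / D2"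
    unfolding K_def adm_ratio_def D1_def D2_def by simp_all
  hence N1: "K * D1 \<le> f1^2 * V^2" and N2: "K * D2 \<le> f2^2 * V^2"
    using D1 D2 by (simp_all add: pos_le_divide_eq)
  have m: "m \<ge> 0" "m \<le> t1^2" "m \<le> t2^2" unfolding m_def by auto
  have "m * K * (D1 + D2) = m * (K * D1) + m * (K * D2)" by (simp add: algebra_simps)
  also have "\<dots> \<le> t1^2 * (f1^2 * V^2) + t2^2 * (f2^2 * V^2)"
  proof (rule add_mono)
    show "m * (K * D1) \<le> t1^2 * (f1^2 * V^2)" by (rule mult_mono[OF m(2) N1]) (use K0 D1 in auto)
    show "m * (K * D2) \<le> t2^2 * (f2^2 * V^2)" by (rule mult_mono[OF m(3) N2]) (use K0 D2 in auto)
  qed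
  also have "\<dots> \<le> (t1*f1 + t2*f2)^2 * V^2"
    using t f by (intro numerator_combination_bound) auto
  finally have N: "m * K * (D1 + D2) \<le> (t1*f1 + t2*f2)^2 * V^2" .
  have "m / c * K = m * K * (D1 + D2) / (c * (D1 + D2))" using D1 D2 t unfolding c_def by simp
  also have "\<dots> \<le> m * K * (D1 + D2) / D"
    using Dle D m K0 D1 D2 by (intro divide_left_mono) auto
  also have "\<dots> \<le> (t1*f1 + t2*f2)^2 * V^2 / D"
    using N D by (intro divide_right_mono) auto
  finally show ?thesis unfolding m_def c_def K_def D_def adm_ratio_def .
qed

lemma filterlim_at_top_min_bound:
  fixes f g h :: "'a \<Rightarrow> real"
  assumes c: "c > 0" and f: "filterlim f at_top F" and g: "filterlim g at_top F"
    and bound: "eventually (\<lambda>x. c * min (f x) (g x) \<le> h x) F"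
  shows "filterlim h at_top F"
proof -
  have "filterlim (\<lambda>x. min (f x) (g x)) at_top F"
    unfolding filterlim_at_top
  proof
    fix Z :: real
    show "eventually (\<lambda>x. Z \<le> min (f x) (g x)) F"
      using f g unfolding filterlim_at_top by (auto intro: eventually_conj)
  qed
  hence "filterlim (\<lambda>x. c * min (f x) (g x)) at_top F"
    using filterlim_tendsto_pos_mult_at_top[OF tendsto_const c] by blast
  thus ?thesis using bound by (rule filterlim_at_top_mono)
qed

theorem mainTheorem2:
  fixes mu :: "'m::topological_space \<Rightarrow> 'g::real_normed_vector"
    and dphi vnorm nu_rest :: "'m \<Rightarrow> real"
    and s1 s2 :: "real \<Rightarrow> real" and t1 t2 :: real
  assumes "\<And>x. dphi x \<ge> 0" and "\<And>x. vnorm x \<ge> 0" and "\<And>x. nu_rest x \<ge> 0"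
    and "admissible mu dphi vnorm (\<lambda>x. nu_rest x + vnorm x + 1) s1"
    and "admissible mu dphi vnorm (\<lambda>x. nu_rest x + vnorm x + 1) s2"
    and "t1 > 0" and "t2 > 0"
  shows "admissible mu dphi vnorm (\<lambda>x. nu_rest x + vnorm x + 1) (\<lambda>r. t1 * s1 r + t2 * s2 r)"
proof -
  define ph where "ph x = norm (mu x) ^ 2 / 2" for x
  define R where "R s x = adm_ratio (hderiv 1 s (ph x)) (hderiv 2 s (ph x)) (dphi x) (vnorm x)
                            (nu_rest x + vnorm x + 1)" for s x
  have sm1: "smooth_halfline s1" and pos1: "\<forall>x\<ge>0. hderiv 1 s1 x > 0"
    and lim1: "filterlim (R s1) at_top cocompact"
    and sm2: "smooth_halfline s2" and pos2: "\<forall>x\<ge>0. hderiv 1 s2 x > 0"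
    and lim2: "filterlim (R s2) at_top cocompact"
    using assms(4,5) unfolding admissible_iff_ratio R_def ph_def by auto
  note comb = hderiv_combination[OF sm1 sm2]
  have ph0: "ph x \<ge> 0" for x unfolding ph_def by simp
  define c where "c = min (t1^2) (t2^2) / (t1 + t2 + 1)"
  have c: "c > 0" unfolding c_def using assms(6,7) by simp
  have bound: "c * min (R s1 x) (R s2 x)
          \<le> R (\<lambda>r. t1 * s1 r + t2 * s2 r) x" for x
  proof -
    have "hderiv 1 s1 (ph x) > 0" "hderiv 1 s2 (ph x) > 0" using pos1 pos2 ph0 by auto
    moreover have "nu_rest x + vnorm x + 1 \<ge> 0" using assms(2,3)[of x] by simp
    ultimately show ?thesis
      using adm_ratio_combination[OF assms(6,7) _ _ assms(1,2)]
      unfolding c_def R_def comb[OF ph0] by blast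
  qed
  have "filterlim (R (\<lambda>r. t1 * s1 r + t2 * s2 r)) at_top cocompact"
    using filterlim_at_top_min_bound[OF c lim1 lim2] bound by (simp add: always_eventually)
  moreover have "smooth_halfline (\<lambda>r. t1 * s1 r + t2 * s2 r)"
    using smooth_halfline_combination[OF sm1 sm2] assms(6,7) by simp
  moreover have "\<forall>x\<ge>0. hderiv 1 (\<lambda>r. t1 * s1 r + t2 * s2 r) x > 0"
    using comb[where k=1] pos1 pos2 assms(6,7) by (simp add: add_pos_pos)
  ultimately show ?thesis unfolding admissible_iff_ratio R_def ph_def by simp
qed

end
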